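(* Let $d\ge2$ and let $k$ be a positive integer. For each $x\in[0,1)$ fix the binary expansion $x=\sum_{j\ge1}a_j^x2^{-j}$ that does not end in infinitely many $1$'s, and for $x=1$ use $a_j^1=1$ for all $j$. Define $\phi(x)=\sum_{j\ge1}2a_j^x3^{-d(j-1)}$ and $\Phi(x_1,\ldots,x_d)=\sum_{p=1}^d3^{-p}\phi(x_p)$; $\Phi$ is injective on $[0,1]^d$. For $\ell\in\{0,\ldots,2^k-2\}$ let $I_\ell=[\ell2^{-k},(\ell+1)2^{-k})$ and let $I_{2^k-1}=[1-2^{-k},1]$. Suppose $f:[0,1]^d\to\mathbb{R}$ is constant on each of the $2^{kd}$ sets $I_{\ell_1}\times\cdots\times I_{\ell_d}$, $\ell_1,\ldots,\ell_d\in\{0,\ldots,2^k-1\}$. Then $g:=f\circ\Phi^{-1}:\Phi([0,1]^d)\to\mathbb{R}$ is Lipschitz with $$|g(x)-g(y)|\le 2\|f\|_\infty3^{kd}|x-y|\qquad\text{for all }x,y\in\Phi([0,1]^d),$$ where $\|f\|_\infty=\sup_{\mathbf x\in[0,1]^d}|f(\mathbf x)|$. *)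

theory Defs
  imports Complex_Main
begin

text \<open>Points of [0,1]^d are functions nat => real, coordinates indexed by 1..d,
  and set to 0 outside {1..d} (extensional representation).\<close>

definition unit_cube :: "nat \<Rightarrow> (nat \<Rightarrow> real) set" where
  "unit_cube d = {x. (\<forall>p\<in>{1..d}. 0 \<le> x p \<and> x p \<le> 1) \<and> (\<forall>p. p \<notin> {1..d} \<longrightarrow> x p = 0)}"

text \<open>j-th binary digit (j >= 1) of x: for x in [0,1) the expansion not ending in
  infinitely many 1's; for x = 1 all digits are 1.\<close>

definition bin_digit :: "real \<Rightarrow> nat \<Rightarrow> real" where
  "bin_digit x j = (if x = 1 then 1 else of_int (\<lfloor>x * 2 ^ j\<rfloor> mod 2))"

definition phi :: "nat \<Rightarrow> real \<Rightarrow> real" where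
  "phi d x = (\<Sum>j. 2 * bin_digit x (j + 1) / 3 ^ (d * j))"

definition Phi :: "nat \<Rightarrow> (nat \<Rightarrow> real) \<Rightarrow> real" where
  "Phi d x = (\<Sum>p = 1..d. phi d (x p) / 3 ^ p)"

definition dyad_int :: "nat \<Rightarrow> nat \<Rightarrow> real set" where
  "dyad_int k l = (if l < 2 ^ k - 1 then {real l / 2 ^ k ..< (real l + 1) / 2 ^ k}
                   else {1 - 1 / 2 ^ k .. 1})"

definition sup_norm :: "nat \<Rightarrow> ((nat \<Rightarrow> real) \<Rightarrow> real) \<Rightarrow> real" where
  "sup_norm d f = Sup ((\<lambda>x. \<bar>f x\<bar>) ` unit_cube d)"

end

theory Submission
  imports Defs "HOL-Library.FuncSet"
begin

text \<open>The ternary expansion of \<open>Phi d x\<close> has only the digits 0 and 2, and its digits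
  interleave the binary digits of the coordinates: the digit at position \<open>d (j - 1) + p\<close> is
  twice the \<open>j\<close>-th binary digit of \<open>x\<^sub>p\<close>. Two such Cantor-type expansions that first differ at
  position \<open>n\<close> are at distance at least \<open>3\<^sup>-\<^sup>n\<close>, since the later digits cannot make up for the
  difference. Points of different dyadic cells of level \<open>k\<close> differ in one of the first \<open>k\<close>
  binary digits of some coordinate, so their images under \<open>Phi\<close> are at least \<open>3\<^sup>-\<^sup>k\<^sup>d\<close> apart,
  while a step function on these cells changes by at most \<open>2 \<parallel>f\<parallel>\<^sub>\<infinity>\<close>.\<close>

definition bin_digit_int :: "real \<Rightarrow> nat \<Rightarrow> int" where
  "bin_digit_int x j = (if x = 1 then 1 else \<lfloor>x * 2 ^ j\<rfloor> mod 2)"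

lemma bin_digit_eq_of_int: "bin_digit x j = of_int (bin_digit_int x j)"
  by (simp add: bin_digit_def bin_digit_int_def)

lemma bin_digit_int_cases: "bin_digit_int x j = 0 \<or> bin_digit_int x j = 1"
  by (auto simp: bin_digit_int_def)

lemma bin_digit_cases: "bin_digit x j = 0 \<or> bin_digit x j = 1"
  using bin_digit_int_cases[of x j] by (auto simp: bin_digit_eq_of_int)

fun dyadic_prefix :: "real \<Rightarrow> nat \<Rightarrow> int" where
  "dyadic_prefix x 0 = 0"
| "dyadic_prefix x (Suc k) = 2 * dyadic_prefix x k + bin_digit_int x (Suc k)"

lemma dyadic_prefix_range: "0 \<le> dyadic_prefix x k \<and> dyadic_prefix x k < 2 ^ k"
proof (induction k)
  case (Suc k)
  then show ?case using bin_digit_int_cases[of x "Suc k"] by auto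
qed simp

lemma floor_double: "\<lfloor>2 * y\<rfloor> = 2 * \<lfloor>y::real\<rfloor> + \<lfloor>2 * y\<rfloor> mod 2"
proof -
  have "2 * \<lfloor>y\<rfloor> \<le> \<lfloor>2 * y\<rfloor>" "\<lfloor>2 * y\<rfloor> \<le> 2 * \<lfloor>y\<rfloor> + 1"
    by linarith+
  then show ?thesis by presburger
qed

lemma dyadic_prefix_eq_floor:
  assumes "0 \<le> x" "x < 1"
  shows "dyadic_prefix x k = \<lfloor>x * 2 ^ k\<rfloor>"
proof (induction k)
  case (Suc k)
  have "\<lfloor>x * 2 ^ Suc k\<rfloor> = \<lfloor>2 * (x * 2 ^ k)\<rfloor>" by (simp add: ac_simps)
  then show ?case using Suc floor_double[of "x * 2 ^ k"] assms by (simp add: bin_digit_int_def ac_simps)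
qed (use assms in \<open>simp add: floor_eq_iff\<close>)

lemma dyadic_prefix_one: "dyadic_prefix 1 k = 2 ^ k - 1"
  by (induction k) (simp_all add: bin_digit_int_def)

lemma dyadic_prefix_approx:
  assumes "0 \<le> x" "x \<le> 1"
  shows "of_int (dyadic_prefix x k) \<le> x * 2 ^ k \<and> x * 2 ^ k \<le> of_int (dyadic_prefix x k) + 1"
proof (cases "x = 1")
  case True
  then show ?thesis by (simp add: dyadic_prefix_one)
next
  case False
  then show ?thesis using assms dyadic_prefix_eq_floor[of x k] by linarith
qed

lemma mem_dyad_int_dyadic_prefix:
  assumes "0 \<le> x" "x \<le> 1"
  shows "x \<in> dyad_int k (nat (dyadic_prefix x k))"
proof (cases "x = 1")
  case True
  have "nat (2 ^ k - 1) = 2 ^ k - 1"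
    by (simp add: nat_diff_distrib nat_power_eq)
  then show ?thesis using True by (simp add: dyadic_prefix_one dyad_int_def)
next
  case False
  define l where "l = dyadic_prefix x k"
  have l: "of_int l \<le> x * 2 ^ k" "x * 2 ^ k < of_int l + 1" "0 \<le> l" "l < 2 ^ k"
    using dyadic_prefix_eq_floor[of x k] dyadic_prefix_range[of x k] False assms
    unfolding l_def by linarith+
  have nat_l: "real (nat l) = of_int l" using l(3) by simp
  show ?thesis
  proof (cases "nat l < 2 ^ k - 1")
    case True
    then show ?thesis using l nat_l unfolding l_def[symmetric] by (simp add: dyad_int_def field_simps)
  next
    case False
    then have "int (2 ^ k - 1) \<le> l" using l(3) by (simp add: le_nat_iff not_less)
    moreover have "int (2 ^ k - 1) = 2 ^ k - 1" by simp
    ultimately have "l = 2 ^ k - 1" using l(4) by linarith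
    then have "real_of_int l = 2 ^ k - 1" by simp
    then have "1 - 1 / 2 ^ k \<le> x" using l(1) by (simp add: field_simps)
    then show ?thesis using False assms by (simp add: dyad_int_def flip: l_def)
  qed
qed

lemma dyadic_prefix_neq_imp_bin_digit_neq:
  "dyadic_prefix x k \<noteq> dyadic_prefix y k \<Longrightarrow> \<exists>j\<in>{1..k}. bin_digit x j \<noteq> bin_digit y j"
proof (induction k)
  case (Suc k)
  show ?case
  proof (cases "dyadic_prefix x k = dyadic_prefix y k")
    case True
    then have "bin_digit x (Suc k) \<noteq> bin_digit y (Suc k)"
      using Suc.prems by (simp add: bin_digit_eq_of_int)
    then show ?thesis by force
  next
    case False
    then show ?thesis using Suc.IH by force
  qed
qed simp

lemma bin_digit_inj:
  assumes "0 \<le> x" "x \<le> 1" "0 \<le> y" "y \<le> 1"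
    and digits: "\<And>j. j \<ge> 1 \<Longrightarrow> bin_digit x j = bin_digit y j"
  shows "x = y"
proof (rule ccontr)
  assume "x \<noteq> y"
  then obtain k where k: "1 / \<bar>x - y\<bar> < 2 ^ k"
    using real_arch_pow[of 2] by auto
  have "dyadic_prefix x k = dyadic_prefix y k"
    by (induction k) (use digits in \<open>simp_all add: bin_digit_eq_of_int\<close>)
  then have "\<bar>x * 2 ^ k - y * 2 ^ k\<bar> \<le> 1"
    using dyadic_prefix_approx[of x k] dyadic_prefix_approx[of y k] assms by linarith
  then have "\<bar>x - y\<bar> * 2 ^ k \<le> 1"
    by (simp add: abs_mult flip: left_diff_distrib)
  with k \<open>x \<noteq> y\<close> show False
    by (simp add: divide_less_eq mult.commute)
qed

text \<open>Ternary digits of \<open>Phi d x\<close> are indexed from 0: digit \<open>n\<close> has weight \<open>1 / 3 ^ (n + 1)\<close>.\<close>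

definition ternary_digit :: "nat \<Rightarrow> (nat \<Rightarrow> real) \<Rightarrow> nat \<Rightarrow> real" where
  "ternary_digit d x n = 2 * bin_digit (x (n mod d + 1)) (n div d + 1)"

lemma ternary_digit_cases: "ternary_digit d x n \<in> {0, 2}"
  using bin_digit_cases[of "x (n mod d + 1)" "n div d + 1"] by (auto simp: ternary_digit_def)

lemma ternary_digit_block:
  "p < d \<Longrightarrow> ternary_digit d x (j * d + p) = 2 * bin_digit (x (Suc p)) (Suc j)"
  by (simp add: ternary_digit_def)

lemma summable_ternary_series:
  fixes a :: "nat \<Rightarrow> real"
  assumes "\<And>n. \<bar>a n\<bar> \<le> B"
  shows "summable (\<lambda>n. a n / 3 ^ (n + 1))"
proof (rule summable_comparison_test'[where N = 0])
  show "summable (\<lambda>n. B * (1 / 3) ^ n)"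
    by (simp add: summable_geometric)
  fix n
  have "0 \<le> B" using assms[of 0] by linarith
  then have "\<bar>a n\<bar> / 3 ^ (n + 1) \<le> B * (1 / 3) ^ n"
    using assms[of n] by (simp add: field_simps power_one_over)
  then show "norm (a n / 3 ^ (n + 1)) \<le> B * (1 / 3) ^ n"
    by (simp add: abs_divide)
qed

lemma ternary_series_ge_first_nonzero:
  fixes e :: "nat \<Rightarrow> real"
  assumes bound: "\<And>n. \<bar>e n\<bar> \<le> 2" and zero: "\<And>n. n < m \<Longrightarrow> e n = 0" and first: "\<bar>e m\<bar> = 2"
  shows "1 / 3 ^ (m + 1) \<le> \<bar>\<Sum>n. e n / 3 ^ (n + 1)\<bar>"
proof -
  let ?h = "\<lambda>n. e n / 3 ^ (n + 1)"
  let ?g = "\<lambda>n. 2 / 3 ^ (m + 2) * (1 / 3 :: real) ^ n"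
  have summable_h: "summable ?h"
    using summable_ternary_series[OF bound] .
  have summable_g: "summable ?g"
    by (simp add: summable_geometric)
  have "(\<Sum>n. ?g n) = 2 / 3 ^ (m + 2) * (\<Sum>n. (1 / 3 :: real) ^ n)"
    by (rule suminf_mult) (simp add: summable_geometric)
  then have sum_g: "(\<Sum>n. ?g n) = 1 / 3 ^ (m + 1)"
    by (simp add: suminf_geometric)
  have tail_le: "\<bar>?h (n + Suc m)\<bar> \<le> ?g n" for n
    using bound[of "n + Suc m"]
    by (simp add: abs_divide divide_right_mono power_add power_one_over field_simps)
  have summable_tail: "summable (\<lambda>n. ?h (n + Suc m))"
    using summable_ignore_initial_segment[OF summable_h] .
  have "(\<Sum>n. ?h (n + Suc m)) \<le> (\<Sum>n. ?g n)"
    by (rule suminf_le[OF _ summable_tail summable_g]) (use tail_le abs_le_D1 in blast)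
  moreover have "(\<Sum>n. - ?g n) \<le> (\<Sum>n. ?h (n + Suc m))"
  proof (rule suminf_le[OF _ summable_minus[OF summable_g] summable_tail])
    show "- ?g n \<le> ?h (n + Suc m)" for n using tail_le[of n] by linarith
  qed
  moreover have "(\<Sum>n. ?h n) = (\<Sum>n. ?h (n + Suc m)) + ?h m"
    using suminf_split_initial_segment[OF summable_h, of "Suc m"] zero by simp
  moreover have "\<bar>?h m\<bar> = 2 * (1 / 3 ^ (m + 1))"
    using first by (simp add: abs_divide)
  ultimately show ?thesis
    using sum_g suminf_minus[OF summable_g] by (simp add: abs_if split: if_splits)
qed

lemma cantor_series_separation:
  fixes a b :: "nat \<Rightarrow> real"
  assumes "\<And>i. a i \<in> {0, 2}" "\<And>i. b i \<in> {0, 2}" and "a n \<noteq> b n"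
  shows "1 / 3 ^ (n + 1) \<le> \<bar>(\<Sum>i. a i / 3 ^ (i + 1)) - (\<Sum>i. b i / 3 ^ (i + 1))\<bar>"
proof -
  define e where "e i = a i - b i" for i
  define m where "m = (LEAST i. e i \<noteq> 0)"
  have e_values: "e i = 0 \<or> \<bar>e i\<bar> = 2" for i
    using assms(1,2)[of i] by (auto simp: e_def)
  have "e n \<noteq> 0" using assms(3) by (simp add: e_def)
  then have "e m \<noteq> 0" "m \<le> n"
    unfolding m_def by (rule LeastI, rule Least_le)
  have "\<bar>a i\<bar> \<le> 2" "\<bar>b i\<bar> \<le> 2" for i
    using assms(1,2)[of i] by auto
  then have "(\<Sum>i. a i / 3 ^ (i + 1)) - (\<Sum>i. b i / 3 ^ (i + 1)) = (\<Sum>i. e i / 3 ^ (i + 1))"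
    unfolding e_def diff_divide_distrib by (intro suminf_diff summable_ternary_series)
  moreover have "1 / 3 ^ (m + 1) \<le> \<bar>\<Sum>i. e i / 3 ^ (i + 1)\<bar>"
  proof (rule ternary_series_ge_first_nonzero)
    show "\<bar>e i\<bar> \<le> 2" for i using e_values[of i] by auto
    show "e i = 0" if "i < m" for i using not_less_Least[of i "\<lambda>i. e i \<noteq> 0"] that m_def by blast
    show "\<bar>e m\<bar> = 2" using e_values[of m] \<open>e m \<noteq> 0\<close> by simp
  qed
  moreover have "1 / (3::real) ^ (n + 1) \<le> 1 / 3 ^ (m + 1)"
    using \<open>m \<le> n\<close> by (intro divide_left_mono power_increasing) auto
  ultimately show ?thesis by linarith
qed

lemma Phi_eq_ternary_series:
  assumes "d > 0"
  shows "Phi d x = (\<Sum>n. ternary_digit d x n / 3 ^ (n + 1))"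
proof -
  define g where "g n = ternary_digit d x n / 3 ^ (n + 1)" for n
  define a where "a p j = 2 * bin_digit (x (Suc p)) (Suc j) / 3 ^ (d * j)" for p j
  have g_block: "g (j * d + p) = a p j / 3 ^ Suc p" if "p < d" for p j
    using ternary_digit_block[OF that, of x j] by (simp add: g_def a_def power_add mult.commute)
  have summable_a: "summable (a p)" for p
  proof (rule summable_comparison_test'[where N = 0])
    show "summable (\<lambda>j. 2 * (1 / 3 :: real) ^ j)"
      by (simp add: summable_geometric)
    fix j
    have "2 / 3 ^ (d * j) \<le> 2 / (3::real) ^ j"
      using assms by (intro divide_left_mono power_increasing) auto
    then show "norm (a p j) \<le> 2 * (1 / 3) ^ j"
      using bin_digit_cases[of "x (Suc p)" "Suc j"] by (auto simp: a_def power_one_over)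
  qed
  have "\<bar>ternary_digit d x n\<bar> \<le> 2" for n
    using ternary_digit_cases[of d x n] by auto
  then have summable_g: "summable g"
    unfolding g_def by (rule summable_ternary_series)
  have "sum g {j * d..<j * d + d} = (\<Sum>p<d. g (j * d + p))" for j
    by (simp add: sum.atLeastLessThan_shift_0 atLeast0LessThan)
  then have "(\<lambda>j. \<Sum>p<d. g (j * d + p)) sums (\<Sum>n. g n)"
    using sums_group[OF summable_sums[OF summable_g] assms] by simp
  then have "(\<Sum>n. g n) = (\<Sum>j. \<Sum>p<d. a p j / 3 ^ Suc p)"
    by (simp add: g_block sums_iff)
  also have "\<dots> = (\<Sum>p<d. \<Sum>j. a p j / 3 ^ Suc p)"
    using summable_a by (intro suminf_sum summable_divide)
  also have "\<dots> = (\<Sum>p<d. (\<Sum>j. a p j) / 3 ^ Suc p)"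
    using summable_a by (simp add: suminf_divide)
  also have "\<dots> = (\<Sum>p<d. phi d (x (Suc p)) / 3 ^ Suc p)"
    by (simp add: phi_def a_def)
  also have "\<dots> = Phi d x"
    by (simp add: Phi_def sum.atLeast1_atMost_eq)
  finally show ?thesis by (simp add: g_def)
qed

lemma Phi_dist_ge_bin_digit:
  assumes "d > 0" "p \<in> {1..d}" "j \<ge> 1" and "bin_digit (x p) j \<noteq> bin_digit (y p) j"
  shows "1 / 3 ^ (d * (j - 1) + p) \<le> \<bar>Phi d x - Phi d y\<bar>"
proof -
  define n where "n = (j - 1) * d + (p - 1)"
  have "ternary_digit d z n = 2 * bin_digit (z (Suc (p - 1))) (Suc (j - 1))" for z
    unfolding n_def by (rule ternary_digit_block) (use assms(2) in auto)
  then have "ternary_digit d z n = 2 * bin_digit (z p) j" for z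
    using assms(2,3) by (simp add: Suc_pred')
  then have "ternary_digit d x n \<noteq> ternary_digit d y n"
    using assms(4) by simp
  then have sep: "1 / 3 ^ (n + 1) \<le> \<bar>Phi d x - Phi d y\<bar>"
    using cantor_series_separation[OF ternary_digit_cases ternary_digit_cases]
    by (simp add: Phi_eq_ternary_series[OF assms(1)])
  have n_eq: "n + 1 = d * (j - 1) + p"
    using assms(2) by (simp add: n_def)
  show ?thesis using sep unfolding n_eq .
qed

lemma Phi_dist_ge_dyadic_prefix:
  assumes "d > 0" "p \<in> {1..d}" and "dyadic_prefix (x p) k \<noteq> dyadic_prefix (y p) k"
  shows "1 / 3 ^ (k * d) \<le> \<bar>Phi d x - Phi d y\<bar>"
proof -
  obtain j where j: "j \<in> {1..k}" "bin_digit (x p) j \<noteq> bin_digit (y p) j"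
    using dyadic_prefix_neq_imp_bin_digit_neq[OF assms(3)] by blast
  have "d * (j - 1) + p \<le> d * (k - 1) + d"
    using j(1) assms(2) by (intro add_mono mult_le_mono2) auto
  also have "\<dots> = k * d"
    using j(1) by (cases k) (auto simp: algebra_simps)
  finally have "1 / (3::real) ^ (k * d) \<le> 1 / 3 ^ (d * (j - 1) + p)"
    by (intro divide_left_mono power_increasing) auto
  also have "\<dots> \<le> \<bar>Phi d x - Phi d y\<bar>"
    using Phi_dist_ge_bin_digit[OF assms(1,2)] j by auto
  finally show ?thesis .
qed

lemma unit_cube_coordinate_bounds: "x \<in> unit_cube d \<Longrightarrow> p \<in> {1..d} \<Longrightarrow> 0 \<le> x p \<and> x p \<le> 1"
  by (simp add: unit_cube_def)

lemma inj_on_Phi: "d > 0 \<Longrightarrow> inj_on (Phi d) (unit_cube d)"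
proof (rule inj_onI, rule ccontr)
  fix x y
  assume d: "d > 0" and x: "x \<in> unit_cube d" and y: "y \<in> unit_cube d"
    and eq: "Phi d x = Phi d y" and "x \<noteq> y"
  then obtain p where "x p \<noteq> y p" by blast
  have p: "p \<in> {1..d}"
  proof (rule ccontr)
    assume "p \<notin> {1..d}"
    then have "x p = 0" "y p = 0"
      using x y by (simp_all add: unit_cube_def)
    with \<open>x p \<noteq> y p\<close> show False by simp
  qed
  then obtain j where "j \<ge> 1" "bin_digit (x p) j \<noteq> bin_digit (y p) j"
    using bin_digit_inj unit_cube_coordinate_bounds[OF x] unit_cube_coordinate_bounds[OF y]
      \<open>x p \<noteq> y p\<close> by blast
  then have "1 / 3 ^ (d * (j - 1) + p) \<le> \<bar>Phi d x - Phi d y\<bar>"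
    using Phi_dist_ge_bin_digit[OF d p] by blast
  moreover have "0 < 1 / (3::real) ^ (d * (j - 1) + p)" by simp
  ultimately show False using eq by linarith
qed

definition dyadic_step_function :: "nat \<Rightarrow> nat \<Rightarrow> ((nat \<Rightarrow> real) \<Rightarrow> real) \<Rightarrow> bool" where
  "dyadic_step_function d k f \<longleftrightarrow> (\<forall>l :: nat \<Rightarrow> nat. (\<forall>p\<in>{1..d}. l p < 2 ^ k) \<longrightarrow>
     (\<exists>c. \<forall>x\<in>unit_cube d. (\<forall>p\<in>{1..d}. x p \<in> dyad_int k (l p)) \<longrightarrow> f x = c))"

definition dyadic_cell :: "nat \<Rightarrow> nat \<Rightarrow> (nat \<Rightarrow> real) \<Rightarrow> nat \<Rightarrow> nat" where
  "dyadic_cell d k x = (\<lambda>p\<in>{1..d}. nat (dyadic_prefix (x p) k))"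

lemma dyadic_cell_in_PiE: "dyadic_cell d k x \<in> PiE {1..d} (\<lambda>_. {..<2 ^ k})"
  using dyadic_prefix_range by (auto simp: dyadic_cell_def nat_less_iff)

lemma mem_dyad_int_dyadic_cell:
  "x \<in> unit_cube d \<Longrightarrow> p \<in> {1..d} \<Longrightarrow> x p \<in> dyad_int k (dyadic_cell d k x p)"
  using mem_dyad_int_dyadic_prefix unit_cube_coordinate_bounds by (simp add: dyadic_cell_def)

lemma dyadic_step_function_eq:
  assumes "dyadic_step_function d k f" "x \<in> unit_cube d" "y \<in> unit_cube d"
    and "dyadic_cell d k x = dyadic_cell d k y"
  shows "f x = f y"
proof -
  have "\<forall>p\<in>{1..d}. dyadic_cell d k x p < 2 ^ k"
    using dyadic_cell_in_PiE[of d k x] by auto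
  then obtain c where "\<forall>z\<in>unit_cube d. (\<forall>p\<in>{1..d}. z p \<in> dyad_int k (dyadic_cell d k x p)) \<longrightarrow> f z = c"
    using assms(1) unfolding dyadic_step_function_def by blast
  moreover have "\<forall>p\<in>{1..d}. x p \<in> dyad_int k (dyadic_cell d k x p)"
    using mem_dyad_int_dyadic_cell[OF assms(2)] by simp
  moreover have "\<forall>p\<in>{1..d}. y p \<in> dyad_int k (dyadic_cell d k x p)"
    using mem_dyad_int_dyadic_cell[OF assms(3)] by (simp add: assms(4))
  ultimately show ?thesis
    using assms(2,3) by simp
qed

lemma bdd_above_dyadic_step_function:
  assumes "dyadic_step_function d k f"
  shows "bdd_above ((\<lambda>x. \<bar>f x\<bar>) ` unit_cube d)"
proof -
  define rep where "rep l = (SOME x. x \<in> unit_cube d \<and> dyadic_cell d k x = l)" for l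
  have "(\<lambda>x. \<bar>f x\<bar>) ` unit_cube d \<subseteq> (\<lambda>l. \<bar>f (rep l)\<bar>) ` PiE {1..d} (\<lambda>_. {..<2 ^ k})"
  proof
    fix v
    assume "v \<in> (\<lambda>x. \<bar>f x\<bar>) ` unit_cube d"
    then obtain x where x: "x \<in> unit_cube d" "v = \<bar>f x\<bar>" by blast
    have "rep (dyadic_cell d k x) \<in> unit_cube d \<and> dyadic_cell d k (rep (dyadic_cell d k x)) = dyadic_cell d k x"
      unfolding rep_def by (rule someI[of _ x]) (simp add: x(1))
    then have "f x = f (rep (dyadic_cell d k x))"
      using dyadic_step_function_eq[OF assms x(1)] by simp
    then show "v \<in> (\<lambda>l. \<bar>f (rep l)\<bar>) ` PiE {1..d} (\<lambda>_. {..<2 ^ k})"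
      using x dyadic_cell_in_PiE by auto
  qed
  moreover have "finite (PiE {1..d} (\<lambda>_. {..<(2::nat) ^ k}))"
    by (intro finite_PiE) auto
  ultimately show ?thesis
    by (meson bdd_above_mono finite_imageI bdd_above_finite)
qed

lemma abs_le_sup_norm:
  "bdd_above ((\<lambda>x. \<bar>f x\<bar>) ` unit_cube d) \<Longrightarrow> x \<in> unit_cube d \<Longrightarrow> \<bar>f x\<bar> \<le> sup_norm d f"
  unfolding sup_norm_def by (rule cSUP_upper)

lemma dyadic_step_function_lipschitz_Phi:
  assumes "d > 0" and step: "dyadic_step_function d k f"
    and x: "x \<in> unit_cube d" and y: "y \<in> unit_cube d"
  shows "\<bar>f x - f y\<bar> \<le> 2 * sup_norm d f * 3 ^ (k * d) * \<bar>Phi d x - Phi d y\<bar>"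
proof -
  note f_bound = abs_le_sup_norm[OF bdd_above_dyadic_step_function[OF step]]
  have "0 \<le> sup_norm d f"
    using f_bound[OF x] by linarith
  show ?thesis
  proof (cases "f x = f y")
    case True
    with \<open>0 \<le> sup_norm d f\<close> show ?thesis by simp
  next
    case False
    then have "dyadic_cell d k x \<noteq> dyadic_cell d k y"
      using dyadic_step_function_eq[OF step x y] by blast
    then obtain p where p: "p \<in> {1..d}" "nat (dyadic_prefix (x p) k) \<noteq> nat (dyadic_prefix (y p) k)"
      unfolding dyadic_cell_def by (meson restrict_ext)
    then have "1 / 3 ^ (k * d) \<le> \<bar>Phi d x - Phi d y\<bar>"
      by (intro Phi_dist_ge_dyadic_prefix[OF assms(1) p(1)]) auto
    then have "1 \<le> 3 ^ (k * d) * \<bar>Phi d x - Phi d y\<bar>"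
      by (simp add: field_simps)
    then have "2 * sup_norm d f \<le> 2 * sup_norm d f * (3 ^ (k * d) * \<bar>Phi d x - Phi d y\<bar>)"
      using \<open>0 \<le> sup_norm d f\<close> by (simp add: mult_le_cancel_left1)
    moreover have "\<bar>f x - f y\<bar> \<le> 2 * sup_norm d f"
      using f_bound[OF x] f_bound[OF y] by linarith
    ultimately show ?thesis by (simp add: mult.assoc)
  qed
qed

theorem lemma3:
  fixes d k :: nat and f :: "(nat \<Rightarrow> real) \<Rightarrow> real"
  assumes "d \<ge> 2" and "k \<ge> 1"
    and const: "\<forall>l :: nat \<Rightarrow> nat. (\<forall>p\<in>{1..d}. l p < 2 ^ k) \<longrightarrow>
       (\<exists>c. \<forall>x\<in>unit_cube d. (\<forall>p\<in>{1..d}. x p \<in> dyad_int k (l p)) \<longrightarrow> f x = c)"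
  shows "inj_on (Phi d) (unit_cube d) \<and>
    (\<forall>u\<in>Phi d ` unit_cube d. \<forall>v\<in>Phi d ` unit_cube d.
       \<bar>f (the_inv_into (unit_cube d) (Phi d) u) - f (the_inv_into (unit_cube d) (Phi d) v)\<bar>
         \<le> 2 * sup_norm d f * 3 ^ (k * d) * \<bar>u - v\<bar>)"
proof -
  have d: "d > 0" using assms(1) by simp
  have step: "dyadic_step_function d k f"
    using const unfolding dyadic_step_function_def .
  have inj: "inj_on (Phi d) (unit_cube d)"
    using inj_on_Phi[OF d] .
  show ?thesis
  proof (intro conjI inj ballI)
    fix u v
    assume "u \<in> Phi d ` unit_cube d" "v \<in> Phi d ` unit_cube d"
    then obtain x y where x: "x \<in> unit_cube d" "u = Phi d x" and y: "y \<in> unit_cube d" "v = Phi d y"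
      by blast
    then show "\<bar>f (the_inv_into (unit_cube d) (Phi d) u) - f (the_inv_into (unit_cube d) (Phi d) v)\<bar>
        \<le> 2 * sup_norm d f * 3 ^ (k * d) * \<bar>u - v\<bar>"
      using dyadic_step_function_lipschitz_Phi[OF d step x(1) y(1)]
        the_inv_into_f_f[OF inj x(1)] the_inv_into_f_f[OF inj y(1)] by simp
  qed
qed

end
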